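(* Let $m,n>0$, let $f$ and $g$ be concave positive real functions on $[0,m]$ and $[0,n]$ respectively, and let $A=\{(x,y): 0\le x\le m,\ 0\le y\le f(x)\}$ and $B=\{(x,y): 0\le x\le n,\ 0\le y\le g(x)\}$. Then: (a) $|A+B|\ge\left(\frac{|A|}{m}+\frac{|B|}{n}\right)(m+n)+\Delta$, where $$\Delta=\left(nf(m)-\frac{n}{m}\int_0^m f(x)\,dx\right)+\left(mg(0)-\frac{m}{n}\int_0^n g(x)\,dx\right).$$ (b) In particular, if $\epsilon\ge 0$ and $f'_+(x)\ge g'_+(y)+\epsilon$ for all $x\in[0,m)$ and $y\in[0,n)$, then $$|A+B|\ge\left(\frac{|A|}{m}+\frac{|B|}{n}\right)(m+n)+\frac{mn}{2}\epsilon.$$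
   Context: $|X|$ denotes area; $A+B$ is the Minkowski sum. For a concave function $h$, $h'_+(x)=\lim_{\lambda\to0,\lambda>0}\frac{h(x+\lambda)-h(x)}{\lambda}$ denotes the right derivative. *)

theory Defs
  imports "HOL-Analysis.Analysis" "HOL-Library.Extended_Real"
begin

definition minkowski_sum :: "(real \<times> real) set \<Rightarrow> (real \<times> real) set \<Rightarrow> (real \<times> real) set" where
  "minkowski_sum A B = {a + b | a b. a \<in> A \<and> b \<in> B}"

definition hypograph_region :: "(real \<Rightarrow> real) \<Rightarrow> real \<Rightarrow> (real \<times> real) set" where
  "hypograph_region h L = {(x, y). 0 \<le> x \<and> x \<le> L \<and> 0 \<le> y \<and> y \<le> h x}"

text \<open>Right derivative, valued in the extended reals (it may be +infinity for a
  concave function at the left endpoint of its domain).\<close>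
definition right_deriv :: "(real \<Rightarrow> real) \<Rightarrow> real \<Rightarrow> ereal" where
  "right_deriv h x = Lim (at_right 0) (\<lambda>l. ereal ((h (x + l) - h x) / l))"

end

theory Submission
  imports Defs
begin

text \<open>For every \<open>s \<in> [0, m]\<close> the sum \<open>A + B\<close> contains three pieces with disjoint interiors:
  the region under \<open>f + g(0)\<close> over \<open>[0, s]\<close>, the region under \<open>g + f(s)\<close> moved to \<open>[s, s + n]\<close>,
  and the region under \<open>f + g(n)\<close> over \<open>[s, m]\<close> moved to \<open>[s + n, m + n]\<close>. Hence
  \<open>|A + B| \<ge> |A| + |B| + s g(0) + n f(s) + (m - s) g(n)\<close>, and \<open>s = m\<close> is exactly (a).
  For (b), the gap between the right derivatives yields a slope \<open>\<beta>\<close> with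
  \<open>g(y) \<le> g(0) + \<beta> y\<close> and \<open>f(t) \<le> f(x) - (\<beta> + \<epsilon>)(x - t)\<close>; integrating these bounds turns
  the estimate for \<open>s < m\<close> into (b) in the limit \<open>s \<rightarrow> m\<close>.\<close>

lemma concave_on_subset: "\<lbrakk>concave_on T h; S \<subseteq> T; convex S\<rbrakk> \<Longrightarrow> concave_on S h"
  unfolding concave_on_def by (rule convex_on_subset)

lemma concave_on_slope_antimono:
  fixes h :: "real \<Rightarrow> real"
  assumes h: "concave_on I h" and I: "x \<in> I" "y \<in> I" and t: "x < t" "t < y"
  shows "(h y - h x) / (y - x) \<le> (h t - h x) / (t - x)"
    and "(h y - h t) / (y - t) \<le> (h y - h x) / (y - x)"
proof -
  have "convex_on I (\<lambda>x. - h x)" using h by (simp add: concave_on_def)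
  note slope = convex_on_slope_le[OF this I t]
  show "(h y - h x) / (y - x) \<le> (h t - h x) / (t - x)"
    using slope(1) t by (simp add: field_simps)
  show "(h y - h t) / (y - t) \<le> (h y - h x) / (y - x)"
    using slope(2) t by (simp add: field_simps)
qed

lemma right_deriv_concave_eq_SUP:
  fixes h :: "real \<Rightarrow> real"
  assumes h: "concave_on {a..b} h" and x: "a \<le> x" "x < b"
  shows "right_deriv h x = (SUP l\<in>{0<..b-x}. ereal ((h (x + l) - h x) / l))"
proof -
  define q where "q l = (h (x + l) - h x) / l" for l
  define S where "S = (SUP l\<in>{0<..b-x}. ereal (q l))"
  have antimono: "q l2 \<le> q l1" if "0 < l1" "l1 < l2" "l2 \<le> b - x" for l1 l2
    using concave_on_slope_antimono(1)[OF h, of x "x + l2" "x + l1"] that x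
    unfolding q_def by simp
  have "((\<lambda>l. ereal (q l)) \<longlongrightarrow> S) (at_right 0)"
  proof (rule order_tendstoI)
    fix c assume "c < S"
    then obtain l0 where l0: "l0 \<in> {0<..b-x}" "c < ereal (q l0)"
      unfolding S_def by (auto simp: less_SUP_iff)
    have "c < ereal (q l)" if "0 < l" "l < l0" for l
      using antimono[of l l0] l0 that by (auto intro: order_less_le_trans)
    then show "\<forall>\<^sub>F l in at_right 0. c < ereal (q l)"
      using l0 unfolding eventually_at_right_field by auto
  next
    fix c assume "S < c"
    have "ereal (q l) < c" if "0 < l" "l < b - x" for l
    proof -
      have "ereal (q l) \<le> S" unfolding S_def using that by (intro SUP_upper) auto
      then show ?thesis using \<open>S < c\<close> by order
    qed
    then show "\<forall>\<^sub>F l in at_right 0. ereal (q l) < c"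
      using x unfolding eventually_at_right_field by (intro exI[of _ "b - x"]) auto
  qed
  then show ?thesis
    unfolding right_deriv_def S_def q_def by (intro tendsto_Lim) auto
qed

lemma concave_slope_le_right_deriv:
  fixes h :: "real \<Rightarrow> real"
  assumes "concave_on {a..b} h" "a \<le> x" "0 < l" "x + l \<le> b"
  shows "ereal ((h (x + l) - h x) / l) \<le> right_deriv h x"
proof -
  have "x < b" using assms by linarith
  then show ?thesis
    unfolding right_deriv_concave_eq_SUP[OF assms(1,2) \<open>x < b\<close>] using assms(3,4)
    by (intro SUP_upper) auto
qed

lemma right_deriv_le_concave_slope:
  fixes h :: "real \<Rightarrow> real"
  assumes h: "concave_on {a..b} h" and "a \<le> t" "t < x" "x < b"
  shows "right_deriv h x \<le> ereal ((h x - h t) / (x - t))"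
proof -
  have "a \<le> x" using assms(2,3) by linarith
  show ?thesis unfolding right_deriv_concave_eq_SUP[OF h \<open>a \<le> x\<close> \<open>x < b\<close>]
  proof (rule SUP_least)
    fix l assume l: "l \<in> {0<..b - x}"
    have "(h (x + l) - h x) / (x + l - x) \<le> (h (x + l) - h t) / (x + l - t)"
      using concave_on_slope_antimono(2)[OF h, of t "x + l" x] l assms by auto
    also have "\<dots> \<le> (h x - h t) / (x - t)"
      using concave_on_slope_antimono(1)[OF h, of t "x + l" x] l assms by auto
    finally show "ereal ((h (x + l) - h x) / l) \<le> ereal ((h x - h t) / (x - t))" by simp
  qed
qed

lemma concave_chord_gap_of_right_deriv_gap:
  fixes f g :: "real \<Rightarrow> real"
  assumes cf: "concave_on {0..m} f" and cg: "concave_on {0..n} g"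
    and gap: "\<forall>x\<in>{0..<m}. \<forall>y\<in>{0..<n}. right_deriv f x \<ge> right_deriv g y + ereal e"
    and y: "0 < y" "y \<le> n" and tx: "0 \<le> t" "t < x" "x < m"
  shows "(g y - g 0) / y + e \<le> (f x - f t) / (x - t)"
proof -
  have "ereal ((g y - g 0) / y) + ereal e \<le> right_deriv g 0 + ereal e"
    using concave_slope_le_right_deriv[OF cg order_refl, of y] y by (intro add_right_mono) simp
  also have "\<dots> \<le> right_deriv f x"
    using gap tx y by auto
  also have "\<dots> \<le> ereal ((f x - f t) / (x - t))"
    by (rule right_deriv_le_concave_slope[OF cf tx])
  finally show ?thesis by simp
qed

lemma affine_bounds_of_right_deriv_gap:
  fixes f g :: "real \<Rightarrow> real"
  assumes "m > 0" "n > 0" and cf: "concave_on {0..m} f" and cg: "concave_on {0..n} g"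
    and gap: "\<forall>x\<in>{0..<m}. \<forall>y\<in>{0..<n}. right_deriv f x \<ge> right_deriv g y + ereal e"
  obtains \<beta> where "\<And>y. 0 \<le> y \<Longrightarrow> y \<le> n \<Longrightarrow> g y \<le> g 0 + \<beta> * y"
    and "\<And>t x. 0 \<le> t \<Longrightarrow> t \<le> x \<Longrightarrow> x < m \<Longrightarrow> f t \<le> f x - (\<beta> + e) * (x - t)"
proof -
  define Y where "Y = (\<lambda>y. (g y - g 0) / y) ` {0<..n}"
  note chord = concave_chord_gap_of_right_deriv_gap[OF cf cg gap]
  have "Y \<noteq> {}" unfolding Y_def using \<open>n > 0\<close> by auto
  have "bdd_above Y"
    using chord[of _ 0 "m / 2"] \<open>m > 0\<close> unfolding Y_def
    by (intro bdd_aboveI[of _ "(f (m / 2) - f 0) / (m / 2) - e"]) force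
  show ?thesis
  proof (rule that)
    fix y :: real assume y: "0 \<le> y" "y \<le> n"
    show "g y \<le> g 0 + Sup Y * y"
    proof (cases "y = 0")
      case False
      then have "(g y - g 0) / y \<le> Sup Y"
        using y by (intro cSup_upper[OF _ \<open>bdd_above Y\<close>]) (auto simp: Y_def)
      then show ?thesis using y False by (simp add: divide_le_eq mult.commute)
    qed simp
  next
    fix t x :: real assume tx: "0 \<le> t" "t \<le> x" "x < m"
    show "f t \<le> f x - (Sup Y + e) * (x - t)"
    proof (cases "t = x")
      case False
      have "Sup Y \<le> (f x - f t) / (x - t) - e"
        using chord tx False by (intro cSup_least[OF \<open>Y \<noteq> {}\<close>]) (force simp: Y_def)
      then show ?thesis using tx False by (simp add: le_divide_eq algebra_simps)
    qed simp
  qed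
qed

lemma concave_on_continuous_on_Ioo:
  fixes h :: "real \<Rightarrow> real"
  assumes "concave_on {a..b} h"
  shows "continuous_on {a<..<b} h"
proof -
  have "concave_on {a<..<b} h"
    by (rule concave_on_subset[OF assms]) auto
  then have "convex_on {a<..<b} (\<lambda>x. - h x)"
    by (simp add: concave_on_def)
  then have "continuous_on {a<..<b} (\<lambda>x. - (- h x))"
    by (intro continuous_on_minus convex_on_continuous) auto
  then show ?thesis by simp
qed

lemma integrable_on_Icc_bounded_continuous_Ioo:
  fixes h :: "real \<Rightarrow> real"
  assumes ct: "continuous_on {a<..<b} h" and bd: "\<And>x. x \<in> {a<..<b} \<Longrightarrow> \<bar>h x\<bar> \<le> M"
  shows "h integrable_on {a..b}"
proof -
  have "h \<in> borel_measurable (lebesgue_on {a<..<b})"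
    by (rule continuous_imp_measurable_on_sets_lebesgue[OF ct]) auto
  moreover have "(\<lambda>x. M) integrable_on {a<..<b}"
    using integrable_const_ivl integrable_on_Icc_iff_Ioo by blast
  ultimately have "h absolutely_integrable_on {a<..<b}"
    using bd by (intro measurable_bounded_by_integrable_imp_absolutely_integrable) auto
  then show ?thesis
    using absolutely_integrable_on_Icc_iff_Ioo set_lebesgue_integral_eq_integral(1) by blast
qed

lemma concave_on_nonneg_le_twice_midpoint:
  fixes h :: "real \<Rightarrow> real"
  assumes h: "concave_on {a..b} h" and nonneg: "\<And>x. x \<in> {a..b} \<Longrightarrow> 0 \<le> h x"
    and x: "x \<in> {a..b}"
  shows "h x \<le> 2 * h ((a + b) / 2)"
proof -
  have x': "a + b - x \<in> {a..b}" using x by auto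
  have "(1/2) * h x + (1/2) * h (a + b - x) \<le> h ((1/2) *\<^sub>R x + (1/2) *\<^sub>R (a + b - x))"
    using concave_onD[OF h, of "1/2"] x x' by simp
  also have "(1/2) *\<^sub>R x + (1/2) *\<^sub>R (a + b - x) = (a + b) / 2"
    by (simp add: field_simps)
  finally show ?thesis using nonneg[OF x'] by simp
qed

lemma concave_on_nonneg_integrable:
  fixes h :: "real \<Rightarrow> real"
  assumes h: "concave_on {a..b} h" and nonneg: "\<And>x. x \<in> {a..b} \<Longrightarrow> 0 \<le> h x"
  shows "h integrable_on {a..b}"
proof (rule integrable_on_Icc_bounded_continuous_Ioo[OF concave_on_continuous_on_Ioo[OF h]])
  fix x assume "x \<in> {a<..<b}"
  then have "x \<in> {a..b}" by auto
  then show "\<bar>h x\<bar> \<le> 2 * h ((a + b) / 2)"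
    using concave_on_nonneg_le_twice_midpoint[OF h nonneg] nonneg by force
qed

lemma integral_le_affine:
  fixes h :: "real \<Rightarrow> real"
  assumes "h integrable_on {a..b}" "a \<le> b" "\<And>x. x \<in> {a..b} \<Longrightarrow> h x \<le> c + d * x"
  shows "integral {a..b} h \<le> c * (b - a) + d * ((b\<^sup>2 - a\<^sup>2) / 2)"
proof -
  have "((\<lambda>x. c + d * x) has_integral (c * (b - a) + d * ((b\<^sup>2 - a\<^sup>2) / 2))) {a..b}"
    using has_integral_const_real[of c a b] \<open>a \<le> b\<close>
    by (intro has_integral_add has_integral_mult_right ident_has_integral) (auto simp: mult.commute)
  then show ?thesis
    using assms by (intro has_integral_le[OF integrable_integral]) auto
qed

definition hypograph_on :: "real \<Rightarrow> real \<Rightarrow> (real \<Rightarrow> real) \<Rightarrow> (real \<times> real) set" where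
  "hypograph_on a b h = {(x, y). a \<le> x \<and> x \<le> b \<and> 0 \<le> y \<and> y \<le> h x}"

lemma hypograph_region_eq_hypograph_on: "hypograph_region h L = hypograph_on 0 L h"
  unfolding hypograph_region_def hypograph_on_def ..

lemma convex_hypograph_on:
  assumes "concave_on {a..b} h"
  shows "convex (hypograph_on a b h)"
  unfolding convex_def
proof (intro ballI allI impI)
  fix p q :: "real \<times> real" and u v :: real
  assume "p \<in> hypograph_on a b h" "q \<in> hypograph_on a b h" and uv: "0 \<le> u" "0 \<le> v" "u + v = 1"
  then obtain x1 y1 x2 y2 where pq: "p = (x1, y1)" "q = (x2, y2)"
    and x: "x1 \<in> {a..b}" "x2 \<in> {a..b}" and y: "0 \<le> y1" "y1 \<le> h x1" "0 \<le> y2" "y2 \<le> h x2"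
    unfolding hypograph_on_def by auto
  have "u * x1 + v * x2 \<in> {a..b}"
    using convexD[OF convex_real_interval(5) x uv] by simp
  moreover have "u * y1 + v * y2 \<le> u * h x1 + v * h x2"
    using y uv by (intro add_mono mult_left_mono) auto
  moreover have "u * h x1 + v * h x2 \<le> h (u * x1 + v * x2)"
    using assms x uv unfolding concave_on_iff by auto
  ultimately show "u *\<^sub>R p + v *\<^sub>R q \<in> hypograph_on a b h"
    using y uv unfolding pq hypograph_on_def by auto
qed

lemma bounded_hypograph_on:
  assumes "\<And>x. x \<in> {a..b} \<Longrightarrow> h x \<le> M"
  shows "bounded (hypograph_on a b h)"
proof (rule bounded_subset[OF bounded_cbox])
  show "hypograph_on a b h \<subseteq> cbox (a, 0) (b, M)"
    using assms unfolding hypograph_on_def by (force simp: cbox_Pair_eq)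
qed

lemma hypograph_on_sets_borel:
  fixes h :: "real \<Rightarrow> real"
  assumes "continuous_on {a<..<b} h"
  shows "hypograph_on a b h \<in> sets (borel \<Otimes>\<^sub>M borel)"
proof -
  \<comment> \<open>\<open>h\<close> is only assumed to be continuous inside \<open>(a, b)\<close>, so the endpoints are treated apart\<close>
  define H where
    "H x = indicator {a<..<b} x *\<^sub>R h x + indicator {a} x * h a + indicator ({b} - {a}) x * h b" for x
  have [measurable]: "(\<lambda>x. indicator {a<..<b} x *\<^sub>R h x) \<in> borel_measurable borel"
    using assms by (intro borel_measurable_continuous_on_indicator) auto
  have [measurable]: "H \<in> borel_measurable borel"
    unfolding H_def by measurable
  have "hypograph_on a b h
      = {p \<in> space (borel \<Otimes>\<^sub>M borel). a \<le> fst p \<and> fst p \<le> b \<and> 0 \<le> snd p \<and> snd p \<le> H (fst p)}"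
    unfolding hypograph_on_def H_def by (auto simp: space_pair_measure indicator_def)
  also have "\<dots> \<in> sets (borel \<Otimes>\<^sub>M borel)" by measurable
  finally show ?thesis .
qed

lemma hypograph_on_measure:
  fixes h :: "real \<Rightarrow> real"
  assumes h: "concave_on {a..b} h" and nonneg: "\<And>x. x \<in> {a..b} \<Longrightarrow> 0 \<le> h x"
  shows "hypograph_on a b h \<in> lmeasurable"
    and "measure lebesgue (hypograph_on a b h) = integral {a..b} h"
proof -
  define U where "U = hypograph_on a b h"
  have U_prod: "U \<in> sets (borel \<Otimes>\<^sub>M borel)"
    unfolding U_def by (rule hypograph_on_sets_borel[OF concave_on_continuous_on_Ioo[OF h]])
  then have U_borel: "U \<in> sets borel"
    by (metis borel_prod)
  have slice: "emeasure lborel (Pair x -` U) = ennreal (h x) * indicator {a..b} x" for x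
  proof (cases "x \<in> {a..b}")
    case True
    then have "Pair x -` U = {0..h x}" unfolding U_def hypograph_on_def by auto
    then show ?thesis using True nonneg by simp
  next
    case False
    then have "Pair x -` U = {}" unfolding U_def hypograph_on_def by auto
    then show ?thesis using False by simp
  qed
  have int: "h integrable_on {a..b}"
    by (rule concave_on_nonneg_integrable[OF h nonneg])
  have "emeasure lborel U = emeasure (lborel \<Otimes>\<^sub>M lborel) U" by (simp add: lborel_prod)
  also have "\<dots> = (\<integral>\<^sup>+x. emeasure lborel (Pair x -` U) \<partial>lborel)"
    by (rule lborel.emeasure_pair_measure_alt) (simp add: U_prod)
  also have "\<dots> = (\<integral>\<^sup>+x. ennreal (h x) * indicator {a..b} x \<partial>lborel)"
    by (simp add: slice)
  also have "\<dots> = ennreal (integral {a..b} h)"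
    by (rule nn_integral_has_integral_lebesgue') (use nonneg int in auto)
  finally have U_emeasure: "emeasure lborel U = ennreal (integral {a..b} h)" .
  show "hypograph_on a b h \<in> lmeasurable"
    using U_borel U_emeasure unfolding U_def by (intro fmeasurableI) auto
  have "integral {a..b} h \<ge> 0" using nonneg by (intro integral_nonneg int) auto
  then show "measure lebesgue (hypograph_on a b h) = integral {a..b} h"
    using U_borel U_emeasure unfolding U_def by (simp add: measure_def)
qed

lemma translate_hypograph_on:
  "(+) (c, 0) ` hypograph_on a b h = hypograph_on (a + c) (b + c) (\<lambda>x. h (x - c))"
  unfolding hypograph_on_def by (force intro: image_eqI[where x = "(_ - c, _)"])

lemma negligible_hypograph_on_Int:
  assumes "b \<le> c"
  shows "negligible (hypograph_on a b h \<inter> hypograph_on c d k)"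
proof (rule negligible_subset)
  show "negligible {p :: real \<times> real. (1, 0) \<bullet> p = b}"
    by (rule negligible_hyperplane) (simp add: zero_prod_def)
  show "hypograph_on a b h \<inter> hypograph_on c d k \<subseteq> {p. (1, 0) \<bullet> p = b}"
    using assms unfolding hypograph_on_def by (auto simp: inner_Pair)
qed

lemma measure_hypograph_on_add_const:
  fixes h :: "real \<Rightarrow> real"
  assumes "a \<le> b" "concave_on {a..b} h" "\<And>x. x \<in> {a..b} \<Longrightarrow> 0 \<le> h x" "0 \<le> c"
  shows "hypograph_on a b (\<lambda>x. h x + c) \<in> lmeasurable"
    and "measure lebesgue (hypograph_on a b (\<lambda>x. h x + c)) = integral {a..b} h + (b - a) * c"
proof -
  have "concave_on {a..b} (\<lambda>x. h x + c)"
    using assms by (intro concave_on_add) (auto simp: concave_on_const)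
  note hyp = hypograph_on_measure[OF this]
  show "hypograph_on a b (\<lambda>x. h x + c) \<in> lmeasurable"
    using hyp(1) assms by (simp add: add_nonneg_nonneg)
  have "h integrable_on {a..b}"
    using assms by (intro concave_on_nonneg_integrable) auto
  from integral_add[OF this integrable_const_ivl, of c]
  show "measure lebesgue (hypograph_on a b (\<lambda>x. h x + c)) = integral {a..b} h + (b - a) * c"
    using hyp(2) assms by (simp add: add_nonneg_nonneg mult.commute)
qed

lemma minkowski_sum_eq_UN: "minkowski_sum A B = (\<Union>a\<in>A. \<Union>b\<in>B. {a + b})"
  unfolding minkowski_sum_def by blast

lemma minkowski_sum_commute: "minkowski_sum A B = minkowski_sum B A"
proof -
  have "minkowski_sum A B \<subseteq> minkowski_sum B A" for A B :: "(real \<times> real) set"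
  proof
    fix p assume "p \<in> minkowski_sum A B"
    then obtain a b where "a \<in> A" "b \<in> B" "p = b + a"
      unfolding minkowski_sum_def by (auto simp: add.commute)
    then show "p \<in> minkowski_sum B A" unfolding minkowski_sum_def by blast
  qed
  then show ?thesis by blast
qed

lemma translate_hypograph_on_subset_minkowski_sum:
  fixes f g :: "real \<Rightarrow> real"
  assumes "0 \<le> a" "b \<le> m" "0 \<le> t" "t \<le> n"
    and f_nonneg: "\<And>x. x \<in> {0..m} \<Longrightarrow> 0 \<le> f x" and g_nonneg: "\<And>y. y \<in> {0..n} \<Longrightarrow> 0 \<le> g y"
  shows "(+) (t, 0) ` hypograph_on a b (\<lambda>x. f x + g t)
           \<subseteq> minkowski_sum (hypograph_region f m) (hypograph_region g n)"
proof
  fix p assume "p \<in> (+) (t, 0) ` hypograph_on a b (\<lambda>x. f x + g t)"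
  then obtain x y where p: "p = (t, 0) + (x, y)" and x: "x \<in> {0..m}" and y: "0 \<le> y" "y \<le> f x + g t"
    using assms unfolding hypograph_on_def by auto
  define y1 where "y1 = min y (f x)"
  have "(x, y1) \<in> hypograph_region f m"
    using x y f_nonneg[OF x] unfolding hypograph_region_def y1_def by auto
  moreover have "(t, y - y1) \<in> hypograph_region g n"
    using assms y g_nonneg[of t] unfolding hypograph_region_def y1_def by (auto simp: min_def)
  moreover have "p = (x, y1) + (t, y - y1)" using p by simp
  ultimately show "p \<in> minkowski_sum (hypograph_region f m) (hypograph_region g n)"
    unfolding minkowski_sum_def by blast
qed

lemma lmeasurable_minkowski_sum_hypograph_region:
  fixes f g :: "real \<Rightarrow> real"
  assumes cf: "concave_on {0..m} f" and cg: "concave_on {0..n} g"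
    and f_nonneg: "\<And>x. x \<in> {0..m} \<Longrightarrow> 0 \<le> f x" and g_nonneg: "\<And>y. y \<in> {0..n} \<Longrightarrow> 0 \<le> g y"
  shows "minkowski_sum (hypograph_region f m) (hypograph_region g n) \<in> lmeasurable"
  unfolding minkowski_sum_eq_UN hypograph_region_eq_hypograph_on
  using concave_on_nonneg_le_twice_midpoint[OF cf f_nonneg] concave_on_nonneg_le_twice_midpoint[OF cg g_nonneg]
  by (intro measurable_convex convex_sums bounded_sums convex_hypograph_on bounded_hypograph_on cf cg)
    auto

lemma hypograph_pieces_subset_minkowski_sum:
  fixes f g :: "real \<Rightarrow> real"
  assumes f_nonneg: "\<And>x. x \<in> {0..m} \<Longrightarrow> 0 \<le> f x" and g_nonneg: "\<And>y. y \<in> {0..n} \<Longrightarrow> 0 \<le> g y"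
    and s: "0 \<le> s" "s \<le> m" and n: "0 \<le> n"
  shows "hypograph_on 0 s (\<lambda>x. f x + g 0) \<union> (+) (s, 0) ` hypograph_on 0 n (\<lambda>y. g y + f s)
           \<union> (+) (n, 0) ` hypograph_on s m (\<lambda>x. f x + g n)
         \<subseteq> minkowski_sum (hypograph_region f m) (hypograph_region g n)"
proof (intro Un_least)
  show "hypograph_on 0 s (\<lambda>x. f x + g 0) \<subseteq> minkowski_sum (hypograph_region f m) (hypograph_region g n)"
    using translate_hypograph_on_subset_minkowski_sum[OF order_refl s(2) order_refl n f_nonneg g_nonneg]
    by (simp add: zero_prod_def[symmetric])
  show "(+) (s, 0) ` hypograph_on 0 n (\<lambda>y. g y + f s)
      \<subseteq> minkowski_sum (hypograph_region f m) (hypograph_region g n)"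
    using translate_hypograph_on_subset_minkowski_sum[where f = g and g = f and m = n and n = m,
        OF order_refl order_refl s g_nonneg f_nonneg]
    unfolding minkowski_sum_commute[of "hypograph_region g n"] .
  show "(+) (n, 0) ` hypograph_on s m (\<lambda>x. f x + g n)
      \<subseteq> minkowski_sum (hypograph_region f m) (hypograph_region g n)"
    by (rule translate_hypograph_on_subset_minkowski_sum[OF s(1) order_refl n order_refl f_nonneg g_nonneg])
qed

lemma minkowski_sum_hypograph_region_measure_ge:
  fixes f g :: "real \<Rightarrow> real"
  assumes cf: "concave_on {0..m} f" and cg: "concave_on {0..n} g"
    and f_nonneg: "\<And>x. x \<in> {0..m} \<Longrightarrow> 0 \<le> f x" and g_nonneg: "\<And>y. y \<in> {0..n} \<Longrightarrow> 0 \<le> g y"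
    and s: "0 \<le> s" "s \<le> m" and n: "0 \<le> n"
  shows "integral {0..m} f + integral {0..n} g + s * g 0 + n * f s + (m - s) * g n
           \<le> measure lebesgue (minkowski_sum (hypograph_region f m) (hypograph_region g n))"
proof -
  define S where "S = minkowski_sum (hypograph_region f m) (hypograph_region g n)"
  define P1 where "P1 = hypograph_on 0 s (\<lambda>x. f x + g 0)"
  define P2 where "P2 = (+) (s, 0) ` hypograph_on 0 n (\<lambda>y. g y + f s)"
  define P3 where "P3 = (+) (n, 0) ` hypograph_on s m (\<lambda>x. f x + g n)"
  have g0: "0 \<le> g 0" "0 \<le> g n" and fs: "0 \<le> f s"
    using g_nonneg f_nonneg n s by auto
  have cf1: "concave_on {0..s} f" and cf2: "concave_on {s..m} f"
    using s by (auto intro: concave_on_subset[OF cf])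
  have M1: "P1 \<in> lmeasurable" "measure lebesgue P1 = integral {0..s} f + s * g 0"
    unfolding P1_def using measure_hypograph_on_add_const[OF s(1) cf1 _ g0(1)] f_nonneg s by auto
  have M2: "P2 \<in> lmeasurable" "measure lebesgue P2 = integral {0..n} g + n * f s"
    unfolding P2_def measure_translation using measure_hypograph_on_add_const[OF n cg _ fs] g_nonneg
    by (auto intro: measurable_translation)
  have M3: "P3 \<in> lmeasurable" "measure lebesgue P3 = integral {s..m} f + (m - s) * g n"
    unfolding P3_def measure_translation using measure_hypograph_on_add_const[OF s(2) cf2 _ g0(2)] f_nonneg s
    by (auto intro: measurable_translation)
  have P23: "P2 = hypograph_on s (s + n) (\<lambda>x. g (x - s) + f s)"
    "P3 = hypograph_on (s + n) (m + n) (\<lambda>x. f (x - n) + g n)"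
    unfolding P2_def P3_def translate_hypograph_on by (simp_all add: add.commute)
  have "integral {0..m} f + integral {0..n} g + s * g 0 + n * f s + (m - s) * g n
      = measure lebesgue P1 + measure lebesgue P2 + measure lebesgue P3"
    using Henstock_Kurzweil_Integration.integral_combine[OF s concave_on_nonneg_integrable[OF cf f_nonneg]]
    unfolding M1 M2 M3 by simp
  also have "\<dots> = measure lebesgue (P1 \<union> P2 \<union> P3)"
  proof (rule measure_Un3_negligible[symmetric, OF M1(1) M2(1) M3(1)])
    show "negligible (P1 \<inter> P2)" "negligible (P1 \<inter> P3)" "negligible (P2 \<inter> P3)"
      unfolding P1_def P23 using n by (auto intro: negligible_hypograph_on_Int)
  qed simp
  also have "\<dots> \<le> measure lebesgue S"
  proof (rule measure_mono_fmeasurable)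
    show "P1 \<union> P2 \<union> P3 \<subseteq> S"
      unfolding P1_def P2_def P3_def S_def
      by (rule hypograph_pieces_subset_minkowski_sum[OF f_nonneg g_nonneg s n])
    show "P1 \<union> P2 \<union> P3 \<in> sets lebesgue" using M1 M2 M3 by auto
    show "S \<in> lmeasurable"
      unfolding S_def by (rule lmeasurable_minkowski_sum_hypograph_region[OF cf cg f_nonneg g_nonneg])
  qed
  finally show ?thesis unfolding S_def .
qed

lemma minkowski_sum_measure_ge_of_affine_bounds:
  fixes f g :: "real \<Rightarrow> real"
  assumes m: "m > 0" and n: "n > 0" and cf: "concave_on {0..m} f" and cg: "concave_on {0..n} g"
    and f_nonneg: "\<And>x. x \<in> {0..m} \<Longrightarrow> 0 \<le> f x" and g_nonneg: "\<And>y. y \<in> {0..n} \<Longrightarrow> 0 \<le> g y"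
    and g_le: "\<And>y. 0 \<le> y \<Longrightarrow> y \<le> n \<Longrightarrow> g y \<le> g 0 + \<beta> * y"
    and f_ge: "\<And>t x. 0 \<le> t \<Longrightarrow> t \<le> x \<Longrightarrow> x < m \<Longrightarrow> f t \<le> f x - (\<beta> + e) * (x - t)"
  shows "(integral {0..m} f / m + integral {0..n} g / n) * (m + n) + m * n / 2 * e
           \<le> measure lebesgue (minkowski_sum (hypograph_region f m) (hypograph_region g n))"
proof -
  define L where "L = measure lebesgue (minkowski_sum (hypograph_region f m) (hypograph_region g n))"
  define IF where "IF = integral {0..m} f"
  define IG where "IG = integral {0..n} g"
  define F where "F s = integral {0..s} f" for s
  \<comment> \<open>\<open>f_ge\<close> is unavailable at \<open>x = m\<close>, where a concave \<open>f\<close> may drop; so bound \<open>L\<close> by \<open>\<psi> s\<close>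
    for \<open>s < m\<close> and let \<open>s \<rightarrow> m\<close>\<close>
  define \<psi> where "\<psi> s = IF + IG + s * g 0 + n / s * F s + n * (\<beta> + e) * s / 2 + (m - s) * g n" for s
  have f_int: "f integrable_on {0..m}"
    by (rule concave_on_nonneg_integrable[OF cf f_nonneg])
  have \<psi>_le: "\<psi> s \<le> L" if "s \<in> {m/2<..<m}" for s
  proof -
    have s: "0 < s" "s < m" using that m by auto
    have "F s \<le> (f s - (\<beta> + e) * s) * (s - 0) + (\<beta> + e) * ((s\<^sup>2 - 0\<^sup>2) / 2)"
      unfolding F_def using s f_ge[where x = s]
      by (intro integral_le_affine integrable_on_subinterval[OF f_int]) (auto simp: algebra_simps)
    then have "F s / s + (\<beta> + e) * s / 2 \<le> f s"
      using s by (simp add: field_simps power2_eq_square)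
    then have "n / s * F s + n * (\<beta> + e) * s / 2 \<le> n * f s"
      using mult_left_mono[of _ _ n] n by (fastforce simp: algebra_simps)
    moreover have "IF + IG + s * g 0 + n * f s + (m - s) * g n \<le> L"
      unfolding IF_def IG_def L_def using s n
      by (intro minkowski_sum_hypograph_region_measure_ge[OF cf cg f_nonneg g_nonneg]) auto
    ultimately show ?thesis unfolding \<psi>_def by linarith
  qed
  have "continuous_on {m/2..m} \<psi>"
    using continuous_on_subset[OF indefinite_integral_continuous_1[OF f_int], of "{m/2..m}"] m
    unfolding \<psi>_def F_def by (intro continuous_intros) auto
  then have "continuous_on (closure {m/2<..<m}) \<psi>"
    using m by simp
  from continuous_le_on_closure[OF this _ \<psi>_le]
  have "\<psi> m \<le> L"
    using m by simp
  moreover have "m / n * IG \<le> m * g 0 + \<beta> * m * n / 2"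
  proof -
    have "IG \<le> g 0 * (n - 0) + \<beta> * ((n\<^sup>2 - 0\<^sup>2) / 2)"
      unfolding IG_def using n g_le
      by (intro integral_le_affine concave_on_nonneg_integrable[OF cg g_nonneg]) auto
    from mult_left_mono[OF this, of m] show ?thesis
      using m n by (simp add: field_simps power2_eq_square)
  qed
  moreover have "(IF / m + IG / n) * (m + n) + m * n / 2 * e
      = \<psi> m + (m / n * IG - (m * g 0 + \<beta> * m * n / 2))"
    using m n unfolding \<psi>_def F_def IF_def by (simp add: field_simps)
  ultimately show ?thesis
    unfolding IF_def IG_def L_def by linarith
qed

theorem lemma4p5:
  fixes f g :: "real \<Rightarrow> real" and m n :: real
  assumes "m > 0" and "n > 0"
    and "concave_on {0..m} f" and "concave_on {0..n} g"
    and "\<forall>x\<in>{0..m}. f x > 0" and "\<forall>x\<in>{0..n}. g x > 0"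
  defines "A \<equiv> hypograph_region f m" and "B \<equiv> hypograph_region g n"
  shows "measure lebesgue (minkowski_sum A B)
           \<ge> (measure lebesgue A / m + measure lebesgue B / n) * (m + n)
             + ((n * f m - n / m * integral {0..m} f) + (m * g 0 - m / n * integral {0..n} g))
         \<and> (\<forall>\<epsilon>::real. \<epsilon> \<ge> 0 \<longrightarrow>
           (\<forall>x\<in>{0..<m}. \<forall>y\<in>{0..<n}. right_deriv f x \<ge> right_deriv g y + ereal \<epsilon>) \<longrightarrow>
           measure lebesgue (minkowski_sum A B)
             \<ge> (measure lebesgue A / m + measure lebesgue B / n) * (m + n) + m * n / 2 * \<epsilon>)"
proof -
  note m = assms(1) and n = assms(2) and cf = assms(3) and cg = assms(4)
  have f_nonneg: "\<And>x. x \<in> {0..m} \<Longrightarrow> 0 \<le> f x" and g_nonneg: "\<And>y. y \<in> {0..n} \<Longrightarrow> 0 \<le> g y"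
    using assms(5,6) by (auto intro: less_imp_le)
  have measure_A: "measure lebesgue A = integral {0..m} f"
    unfolding A_def hypograph_region_eq_hypograph_on by (rule hypograph_on_measure(2)[OF cf f_nonneg])
  have measure_B: "measure lebesgue B = integral {0..n} g"
    unfolding B_def hypograph_region_eq_hypograph_on by (rule hypograph_on_measure(2)[OF cg g_nonneg])
  have "(integral {0..m} f / m + integral {0..n} g / n) * (m + n)
        + ((n * f m - n / m * integral {0..m} f) + (m * g 0 - m / n * integral {0..n} g))
      = integral {0..m} f + integral {0..n} g + m * g 0 + n * f m + (m - m) * g n"
    using m n by (simp add: field_simps)
  also have "\<dots> \<le> measure lebesgue (minkowski_sum A B)"
    unfolding A_def B_def using m n
    by (intro minkowski_sum_hypograph_region_measure_ge[OF cf cg f_nonneg g_nonneg]) auto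
  finally have part_a: "measure lebesgue (minkowski_sum A B)
      \<ge> (measure lebesgue A / m + measure lebesgue B / n) * (m + n)
        + ((n * f m - n / m * integral {0..m} f) + (m * g 0 - m / n * integral {0..n} g))"
    unfolding measure_A measure_B .
  have part_b: "measure lebesgue (minkowski_sum A B)
      \<ge> (measure lebesgue A / m + measure lebesgue B / n) * (m + n) + m * n / 2 * \<epsilon>"
    if gap: "\<forall>x\<in>{0..<m}. \<forall>y\<in>{0..<n}. right_deriv f x \<ge> right_deriv g y + ereal \<epsilon>" for \<epsilon>
  proof -
    obtain \<beta> where "\<And>y. 0 \<le> y \<Longrightarrow> y \<le> n \<Longrightarrow> g y \<le> g 0 + \<beta> * y"
      and "\<And>t x. 0 \<le> t \<Longrightarrow> t \<le> x \<Longrightarrow> x < m \<Longrightarrow> f t \<le> f x - (\<beta> + \<epsilon>) * (x - t)"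
      using affine_bounds_of_right_deriv_gap[OF m n cf cg gap] by blast
    from minkowski_sum_measure_ge_of_affine_bounds[OF m n cf cg f_nonneg g_nonneg this]
    show ?thesis unfolding measure_A measure_B unfolding A_def B_def .
  qed
  show ?thesis using part_a part_b by blast
qed

end
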